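(* Let $S$ be a commutative semigroup and $H$ a subsemigroup of $S$. Suppose $p$ is a monoid congruence on $S$ such that $H$ is (the congruence class that is) the identity element of $S/p$. Let $\{H_i : i\in I\}$ be the family of all subsets $H_i$ of $S$ satisfying $H\subseteq \mathrm{Sep}\,H_i$. Then $$P(H;H_i,I)\subseteq p\subseteq P_H,$$ where $P(H;H_i,I)=\{(a,b)\in S\times S:\ H_i\dots a=H_i\dots b \text{ for all } i\in I\}$ and $P_H=\{(a,b)\in S\times S:\ H\dots a=H\dots b\}$.
   Context: For a semigroup $S$ and $A\subseteq S$, $\mathrm{Sep}\,A$ (the separator of $A$) is the set of all $x\in S$ with $xA\subseteq A$, $Ax\subseteq A$, $x(S\setminus A)\subseteq S\setminus A$ and $(S\setminus A)x\subseteq S\setminus A$. For $A\subseteq S$ and $a\in S$, $A\dots a=\{(x,y)\in S\times S:\ xay\in A\}$. A congruence $p$ on $S$ is a monoid congruence if the factor semigroup $S/p$ has an identity element. *)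

theory Defs
  imports Main
begin

text \<open>The semigroup S is the whole type 'a (of class semigroup_mult).\<close>

definition Sep :: "'a::semigroup_mult set \<Rightarrow> 'a set" where
  "Sep A = {x. (\<forall>a\<in>A. x * a \<in> A) \<and> (\<forall>a\<in>A. a * x \<in> A) \<and>
                (\<forall>a\<in>-A. x * a \<in> -A) \<and> (\<forall>a\<in>-A. a * x \<in> -A)}"

definition dots :: "'a::semigroup_mult set \<Rightarrow> 'a \<Rightarrow> ('a \<times> 'a) set" where
  "dots A a = {(x, y). x * a * y \<in> A}"

definition subsemigroup :: "'a::semigroup_mult set \<Rightarrow> bool" where
  "subsemigroup H \<longleftrightarrow> (\<forall>x\<in>H. \<forall>y\<in>H. x * y \<in> H)"

definition congruence :: "('a::semigroup_mult \<times> 'a) set \<Rightarrow> bool" where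
  "congruence p \<longleftrightarrow> equiv UNIV p \<and>
     (\<forall>a b c. (a, b) \<in> p \<longrightarrow> (c * a, c * b) \<in> p \<and> (a * c, b * c) \<in> p)"

definition identity_rep :: "('a::semigroup_mult \<times> 'a) set \<Rightarrow> 'a \<Rightarrow> bool" where
  "identity_rep p e \<longleftrightarrow> (\<forall>a. (e * a, a) \<in> p \<and> (a * e, a) \<in> p)"

definition monoid_congruence :: "('a::semigroup_mult \<times> 'a) set \<Rightarrow> bool" where
  "monoid_congruence p \<longleftrightarrow> congruence p \<and> (\<exists>e. identity_rep p e)"

definition P_H :: "'a::semigroup_mult set \<Rightarrow> ('a \<times> 'a) set" where
  "P_H H = {(a, b). dots H a = dots H b}"

definition P_fam :: "'a::semigroup_mult set \<Rightarrow> ('a \<times> 'a) set" where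
  "P_fam H = {(a, b). \<forall>A. H \<subseteq> Sep A \<longrightarrow> dots A a = dots A b}"

end

theory Submission
  imports Defs
begin

text \<open>Since \<open>a p b\<close> implies \<open>xay p xby\<close>, for a class \<open>A\<close> of \<open>p\<close> the relation \<open>A\<dots>a\<close>
  only depends on the class of \<open>a\<close>; this gives \<open>p \<subseteq> P\<^sub>H\<close>. Conversely, every class \<open>A\<close> of \<open>p\<close> is
  separated by the identity class \<open>H\<close>, and \<open>(e, e) \<in> A\<dots>a\<close> for \<open>A\<close> the class of \<open>a\<close>;
  so \<open>A\<dots>a = A\<dots>b\<close> forces \<open>e b e\<close>, hence \<open>b\<close>, into the class of \<open>a\<close>.\<close>

lemma congruence_equiv: "congruence p \<Longrightarrow> equiv UNIV p"
  unfolding congruence_def by blast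

lemma congruence_sym: "congruence p \<Longrightarrow> (a, b) \<in> p \<Longrightarrow> (b, a) \<in> p"
  by (meson congruence_equiv equiv_def symD)

lemma congruence_trans: "congruence p \<Longrightarrow> (a, b) \<in> p \<Longrightarrow> (b, c) \<in> p \<Longrightarrow> (a, c) \<in> p"
  by (meson congruence_equiv equiv_def transD)

lemma congruence_mult_both_sides:
  assumes "congruence p" and "(a, b) \<in> p"
  shows "(x * a * y, x * b * y) \<in> p"
  using assms unfolding congruence_def by blast

lemma identity_rep_sandwich:
  assumes "congruence p" and "identity_rep p e"
  shows "(e * a * e, a) \<in> p"
proof -
  have "(e * a * e, e * a) \<in> p" "(e * a, a) \<in> p"
    using assms(2) unfolding identity_rep_def by blast+
  then show ?thesis
    using congruence_trans[OF assms(1)] by blast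
qed

lemma identity_class_subset_Sep:
  assumes "congruence p" and "identity_rep p e"
  shows "p `` {e} \<subseteq> Sep (p `` {a})"
proof
  fix h assume "h \<in> p `` {e}"
  then have "(e, h) \<in> p" by blast
  then have "(e * x, h * x) \<in> p" "(x * e, x * h) \<in> p" for x
    using assms(1) unfolding congruence_def by blast+
  moreover have "(e * x, x) \<in> p" "(x * e, x) \<in> p" for x
    using assms(2) unfolding identity_rep_def by blast+
  ultimately have "(h * x, x) \<in> p" "(x * h, x) \<in> p" for x
    using congruence_sym[OF assms(1)] congruence_trans[OF assms(1)] by blast+
  then have "h * x \<in> p `` {a} \<longleftrightarrow> x \<in> p `` {a}" "x * h \<in> p `` {a} \<longleftrightarrow> x \<in> p `` {a}" for x
    using congruence_sym[OF assms(1)] congruence_trans[OF assms(1)] by blast+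
  then show "h \<in> Sep (p `` {a})"
    unfolding Sep_def by auto
qed

lemma congruence_subset_P_H:
  assumes "congruence p"
  shows "p \<subseteq> P_H (p `` {c})"
proof clarify
  fix a b assume "(a, b) \<in> p"
  then have "(x * a * y, x * b * y) \<in> p" for x y
    using assms congruence_mult_both_sides by blast
  then have "x * a * y \<in> p `` {c} \<longleftrightarrow> x * b * y \<in> p `` {c}" for x y
    using congruence_sym[OF assms] congruence_trans[OF assms] by blast
  then show "(a, b) \<in> P_H (p `` {c})"
    unfolding P_H_def dots_def by auto
qed

lemma P_fam_identity_class_subset:
  assumes "congruence p" and "identity_rep p e"
  shows "P_fam (p `` {e}) \<subseteq> p"
proof clarify
  fix a b assume ab: "(a, b) \<in> P_fam (p `` {e})"
  let ?A = "p `` {a}"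
  have "dots ?A a = dots ?A b"
    using ab identity_class_subset_Sep[OF assms] unfolding P_fam_def by blast
  moreover have "(e, e) \<in> dots ?A a"
    using identity_rep_sandwich[OF assms] congruence_sym[OF assms(1)]
    unfolding dots_def by blast
  ultimately have "(a, e * b * e) \<in> p"
    unfolding dots_def by auto
  then show "(a, b) \<in> p"
    using identity_rep_sandwich[OF assms] congruence_trans[OF assms(1)] by blast
qed

theorem theorem4:
  fixes H :: "'a::ab_semigroup_mult set" and p :: "('a \<times> 'a) set"
  assumes "subsemigroup H"
    and "monoid_congruence p"
    and "\<exists>e. identity_rep p e \<and> H = p `` {e}"
  shows "P_fam H \<subseteq> p \<and> p \<subseteq> P_H H"
proof -
  obtain e where e: "identity_rep p e" and H: "H = p `` {e}"
    using assms(3) by blast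
  have "congruence p"
    using assms(2) unfolding monoid_congruence_def by blast
  then show ?thesis
    using P_fam_identity_class_subset[OF _ e] congruence_subset_P_H unfolding H by blast
qed

end
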